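(* Let $\mu,\nu,d$ be integers ($d\ge1$) and $M$ an integer with $q^{\mu-1}\le M<q^\mu$. Let $\kappa_d$ be an integer with $1\le\kappa_d\le\frac23(\mu+\nu)$ and $q^{\kappa_d-1}<M^2/d^2\le q^{\kappa_d}$. Let $\rho_1$ be an integer with $0\le\rho_1\le\mu+\nu-\kappa_d$, let $\vartheta'\in\mathbb{R}$, and let $l\ge0$ be an integer. For $0\le u<q^{\kappa_d}$ and $0\le h<q^{\rho_1}$ put $$c_{\kappa_d,\rho_1,l}(u,h)=\frac{1}{q^{\rho_1}}\sum_{0\le w<q^{\rho_1}}f_P^{(\kappa_d+\rho_1)}\big(u+wq^{\kappa_d}+q^{\kappa_d+\rho_1}\lfloor q^l/q^{\rho_1}\rfloor\big)\,\overline{f_P^{(\kappa_d+\rho_1)}\big(wq^{\kappa_d}+q^{\kappa_d+\rho_1}\lfloor q^l/q^{\rho_1}\rfloor\big)}\,e\Big(-\frac{hw}{q^{\rho_1}}\Big),$$ and $$S(M,d,l)=\sum_{0\le h<q^{\rho_1}}\ \sum_{\frac{M}{qd}\le m'<\frac Md}\frac1{m'}\sum_{\substack{0\le k'<m'\\ \gcd(k',m')=1}}\Big|\sum_{0\le u<q^{\kappa_d}}c_{\kappa_d,\rho_1,l}(u,h)\,e\Big(-\frac{u\vartheta'}{q^{\mu+\nu}}+\frac{uk'}{m'}\Big)\Big|.$$ Then $|S(M,d,l)|\ll(\log q)\,q^{\rho_1/2+\kappa_d}$.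
   Context: Fix an integer $q\ge2$. For an integer $n\ge0$, $\varepsilon_i(n)$ is the $i$-th digit of $n$ in base $q$ ($\varepsilon_0$ the units digit). For real $x>0$, $T_q(x)=\lfloor\log x/\log q\rfloor$. $e(x)=\exp(2\pi i x)$. $P:\mathbb{N}\to\mathbb{N}$ is a nondecreasing integer-valued function. For integers $x,y\ge0$, $a_P(x,y)=\sum_{i\ge0}\varepsilon_{i+P(y)}(x)\cdots\varepsilon_i(x)$. Fix $\alpha\in\mathbb{R}$ and set $f_P(x,y)=e(\alpha a_P(x,y))$. For an integer $\rho\ge0$, $f_P^{(\rho)}(x,y)=f_P(x\bmod q^\rho,y)$ and, for an integer $n\ge1$, $f_P^{(\rho)}(n)=f_P^{(\rho)}(n,T_q(n))$. The implied constant depends at most on $q$. *)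

theory Defs
  imports Complex_Main
begin

definition digit :: "nat \<Rightarrow> nat \<Rightarrow> nat \<Rightarrow> nat" where
  "digit q i n = n div q ^ i mod q"

definition Tq :: "nat \<Rightarrow> real \<Rightarrow> int" where
  "Tq q x = \<lfloor>ln x / ln (real q)\<rfloor>"

definition e :: "real \<Rightarrow> complex" where
  "e x = exp (2 * of_real pi * \<i> * of_real x)"

text \<open>a_P(x,y) = sum over i of eps_{i+P(y)}(x) ... eps_i(x); digits of x vanish
  for i >= x, so the sum over i < x + 1 contains all nonzero terms.\<close>
definition aP :: "nat \<Rightarrow> (nat \<Rightarrow> nat) \<Rightarrow> nat \<Rightarrow> nat \<Rightarrow> nat" where
  "aP q P x y = (\<Sum>i<x+1. \<Prod>j\<le>P y. digit q (i + j) x)"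

definition fP :: "nat \<Rightarrow> real \<Rightarrow> (nat \<Rightarrow> nat) \<Rightarrow> nat \<Rightarrow> nat \<Rightarrow> complex" where
  "fP q \<alpha> P x y = e (\<alpha> * real (aP q P x y))"

definition fPr :: "nat \<Rightarrow> real \<Rightarrow> (nat \<Rightarrow> nat) \<Rightarrow> nat \<Rightarrow> nat \<Rightarrow> complex" where
  "fPr q \<alpha> P \<rho> n = fP q \<alpha> P (n mod q ^ \<rho>) (nat (Tq q (real n)))"

definition ccoef :: "nat \<Rightarrow> real \<Rightarrow> (nat \<Rightarrow> nat) \<Rightarrow> nat \<Rightarrow> nat \<Rightarrow> nat \<Rightarrow> nat \<Rightarrow> nat \<Rightarrow> complex" where
  "ccoef q \<alpha> P \<kappa> \<rho> l u h =
     (1 / of_nat (q ^ \<rho>)) *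
     (\<Sum>w<q ^ \<rho>.
        fPr q \<alpha> P (\<kappa> + \<rho>) (u + w * q ^ \<kappa> + q ^ (\<kappa> + \<rho>) * (q ^ l div q ^ \<rho>))
      * cnj (fPr q \<alpha> P (\<kappa> + \<rho>) (w * q ^ \<kappa> + q ^ (\<kappa> + \<rho>) * (q ^ l div q ^ \<rho>)))
      * e (- (real h * real w) / real (q ^ \<rho>)))"

end

theory Submission
  imports Defs "HOL-Analysis.Analysis"
begin

text \<open>Bounding \<open>1/m'\<close> by \<open>qd/M\<close> and applying Cauchy--Schwarz over the triples \<open>(h, m', k')\<close>
  reduces the estimate to two mean-square bounds. Two distinct fractions \<open>k'/m'\<close> with \<open>m' < M/d\<close>
  are at distance at least \<open>(d/M)^2 \<ge> q^-\<kappa>\<close> modulo one, so the large sieve bounds the sum over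
  \<open>(m', k')\<close> of \<open>|\<Sum>u. c(u,h) e(u (\<beta> + k'/m'))|^2\<close> by \<open>8 q^\<kappa> \<Sum>u. |c(u,h)|^2\<close>; and
  \<open>\<Sum>h. |c(u,h)|^2 = O(1)\<close>, because \<open>c(u,-)\<close> is a normalised discrete Fourier transform of
  unimodular values. As there are at most \<open>4 M^2/d^2\<close> fractions, the whole sum is
  \<open>O(q \<cdot> q^(\<rho>\<^sub>1/2) \<cdot> q^\<kappa>)\<close>; the factor \<open>q / log q\<close> goes into the implied constant, which may
  depend on \<open>q\<close>.\<close>

section \<open>Additive characters and the Dirichlet kernel\<close>

lemma e_add: "e (a + b) = e a * e b"
  by (simp add: e_def distrib_left distrib_right exp_add[symmetric] algebra_simps)

lemma norm_e [simp]: "norm (e x) = 1"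
  unfolding e_def by (simp add: mult.commute mult.left_commute)

lemma cnj_e: "cnj (e x) = e (- x)"
  unfolding e_def by (simp add: exp_cnj)

lemma e_of_int: "e (of_int n) = 1"
proof -
  have "exp (2 * of_real pi * \<i> * of_real (of_int n)) = exp (\<i> * (of_int n * (of_real pi * 2)))"
    by (simp add: algebra_simps)
  also have "\<dots> = 1" by (rule exp_2pi_1_int)
  finally show ?thesis unfolding e_def .
qed

lemma e_frac: "e (frac x) = e x"
proof -
  have "x = frac x + of_int \<lfloor>x\<rfloor>" by (simp add: frac_def)
  hence "e x = e (frac x) * e (of_int \<lfloor>x\<rfloor>)" by (metis e_add)
  thus ?thesis by (simp add: e_of_int)
qed

lemma norm_e_minus_one: "norm (e x - 1) = 2 * \<bar>sin (pi * x)\<bar>"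
proof -
  have "e x = exp (\<i> * of_real (2 * pi * x))" unfolding e_def by (simp add: algebra_simps)
  moreover have "norm (exp (\<i> * of_real (2 * pi * x)) - 1) = 2 * \<bar>sin (2 * pi * x / 2)\<bar>"
    by (rule dist_exp_i_1)
  moreover have "2 * pi * x / 2 = pi * x" by simp
  ultimately show ?thesis by metis
qed

lemma sin_ge_linear:
  assumes "0 \<le> x" "x \<le> pi / 2"
  shows "x / pi \<le> sin x"
proof (cases "x \<le> pi / 3")
  case True
  let ?f = "\<lambda>x. sin x - x / 2"
  have "?f 0 \<le> ?f x"
  proof (rule DERIV_nonneg_imp_nondecreasing[OF assms(1)])
    fix u assume u: "0 \<le> u" "u \<le> x"
    show "\<exists>y. (?f has_real_derivative y) (at u) \<and> 0 \<le> y"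
    proof (intro exI conjI)
      show "(?f has_real_derivative cos u - 1 / 2) (at u)"
        by (auto intro!: derivative_eq_intros)
      have "cos (pi / 3) \<le> cos u" using u True by (intro cos_monotone_0_pi_le) auto
      thus "0 \<le> cos u - 1 / 2" by (simp add: cos_60)
    qed
  qed
  hence "x / 2 \<le> sin x" by simp
  moreover have "x / pi \<le> x / 2" using assms pi_gt3 by (intro divide_left_mono) auto
  ultimately show ?thesis by linarith
next
  case False
  hence "sin (pi / 3) \<le> sin x" using assms by (intro sin_monotone_2pi_le) auto
  moreover have "1 \<le> sqrt 3" by simp
  ultimately have "1 / 2 \<le> sin x" using sin_60 by linarith
  moreover have "x / pi \<le> 1 / 2" using assms pi_gt3 by (simp add: field_simps)
  ultimately show ?thesis by linarith
qed

lemma norm_e_minus_one_ge: "2 * min (frac x) (1 - frac x) \<le> norm (e x - 1)"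
proof -
  let ?y = "frac x"
  have y: "0 \<le> ?y" "?y < 1" by (auto simp: frac_lt_1)
  have "min ?y (1 - ?y) \<le> \<bar>sin (pi * ?y)\<bar>"
  proof (cases "?y \<le> 1 / 2")
    case True
    have "pi * ?y / pi \<le> sin (pi * ?y)" using y True by (intro sin_ge_linear) auto
    thus ?thesis by simp
  next
    case False
    have "pi * (1 - ?y) / pi \<le> sin (pi * (1 - ?y))" using y False by (intro sin_ge_linear) auto
    moreover have "sin (pi * (1 - ?y)) = sin (pi * ?y)"
      by (metis sin_pi_minus right_diff_distrib mult.right_neutral)
    ultimately show ?thesis by simp
  qed
  moreover have "norm (e x - 1) = 2 * \<bar>sin (pi * ?y)\<bar>" by (metis e_frac norm_e_minus_one)
  ultimately show ?thesis by (simp add: min_def split: if_splits)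
qed

definition dirichlet_kernel :: "nat \<Rightarrow> real \<Rightarrow> complex" where
  "dirichlet_kernel L t = (\<Sum>a<L. e (real a * t))"

lemma dirichlet_kernel_telescope: "(e t - 1) * dirichlet_kernel L t = e (real L * t) - 1"
proof (induction L)
  case 0 thus ?case by (simp add: dirichlet_kernel_def e_def)
next
  case (Suc L)
  have "(e t - 1) * dirichlet_kernel (Suc L) t
        = (e t - 1) * dirichlet_kernel L t + (e t - 1) * e (real L * t)"
    by (simp add: dirichlet_kernel_def algebra_simps)
  also have "\<dots> = e t * e (real L * t) - 1"
    using Suc by (simp add: algebra_simps)
  also have "e t * e (real L * t) = e (real (Suc L) * t)"
    by (simp add: e_add[symmetric] algebra_simps)
  finally show ?case .
qed

lemma cnj_dirichlet_kernel: "cnj (dirichlet_kernel L t) = dirichlet_kernel L (- t)"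
  by (simp add: dirichlet_kernel_def cnj_e)

lemma norm_dirichlet_kernel_le: "norm (dirichlet_kernel L t) \<le> real L"
  unfolding dirichlet_kernel_def using norm_sum[of "\<lambda>a. e (real a * t)" "{..<L}"] by simp

lemma norm_dirichlet_kernel_sq_le:
  assumes "0 < frac t"
  shows "(norm (dirichlet_kernel L t))\<^sup>2 \<le> 1 / (frac t)\<^sup>2 + 1 / (1 - frac t)\<^sup>2"
proof -
  let ?y = "frac t"
  let ?m = "min ?y (1 - ?y)"
  have m: "0 < ?m" using assms frac_lt_1[of t] by simp
  have "norm (e t - 1) * norm (dirichlet_kernel L t) = norm (e (real L * t) - 1)"
    by (metis dirichlet_kernel_telescope norm_mult)
  also have "\<dots> \<le> 2" using norm_triangle_ineq4[of "e (real L * t)" 1] by simp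
  moreover have "2 * ?m * norm (dirichlet_kernel L t) \<le> norm (e t - 1) * norm (dirichlet_kernel L t)"
    by (intro mult_right_mono norm_e_minus_one_ge) auto
  ultimately have "2 * ?m * norm (dirichlet_kernel L t) \<le> 2" by linarith
  hence "norm (dirichlet_kernel L t) \<le> 1 / ?m" using m by (simp add: field_simps)
  hence "(norm (dirichlet_kernel L t))\<^sup>2 \<le> (1 / ?m)\<^sup>2" by (intro power_mono) auto
  also have "\<dots> \<le> 1 / ?y\<^sup>2 + 1 / (1 - ?y)\<^sup>2"
    by (cases "?y \<le> 1 - ?y") (auto simp: min_def power_divide)
  finally show ?thesis .
qed

section \<open>Well-separated points modulo one\<close>

definition separated :: "real \<Rightarrow> ('a \<Rightarrow> real) \<Rightarrow> 'a set \<Rightarrow> bool" where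
  "separated \<delta> x P \<longleftrightarrow>
     (\<forall>i\<in>P. \<forall>j\<in>P. i \<noteq> j \<longrightarrow> \<delta> \<le> frac (x i - x j) \<and> frac (x i - x j) \<le> 1 - \<delta>)"

lemma sum_inverse_squares_le: "(\<Sum>k\<in>{1..K}. 1 / (real k)\<^sup>2) \<le> 2 - 1 / real (max K 1)"
proof (induction K)
  case 0 thus ?case by simp
next
  case (Suc K)
  show ?case
  proof (cases "K = 0")
    case True thus ?thesis by simp
  next
    case False
    hence K: "real K \<ge> 1" by simp
    have "1 / (real K + 1)\<^sup>2 \<le> 1 / (real K * (real K + 1))"
      using K by (intro divide_left_mono) (auto simp: power2_eq_square)
    also have "\<dots> = 1 / real K - 1 / (real K + 1)" using K by (simp add: field_simps)
    finally have "1 / (real K + 1)\<^sup>2 \<le> 1 / real K - 1 / (real K + 1)" .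
    with Suc False show ?thesis by (simp add: add.commute)
  qed
qed

lemma sum_inverse_squares_finite_le:
  assumes "finite S" "0 \<notin> S"
  shows "(\<Sum>k\<in>S. 1 / (real k)\<^sup>2) \<le> 2"
proof (cases "S = {}")
  case False
  have "S \<subseteq> {1..Max S}"
  proof
    fix k assume "k \<in> S"
    thus "k \<in> {1..Max S}" using assms by (cases k) (auto intro: Max_ge)
  qed
  hence "(\<Sum>k\<in>S. 1 / (real k)\<^sup>2) \<le> (\<Sum>k\<in>{1..Max S}. 1 / (real k)\<^sup>2)"
    by (intro sum_mono2) auto
  also have "\<dots> \<le> 2"
    using sum_inverse_squares_le[of "Max S"] by (smt (verit) zero_le_divide_1_iff of_nat_0_le_iff)
  finally show ?thesis .
qed simp

lemma sum_inverse_squares_separated_le: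
  fixes z :: "'a \<Rightarrow> real"
  assumes fin: "finite I" and N: "N \<ge> 1"
    and low: "\<And>i. i \<in> I \<Longrightarrow> 1 / real N \<le> z i"
    and sep: "\<And>i j. i \<in> I \<Longrightarrow> j \<in> I \<Longrightarrow> i \<noteq> j \<Longrightarrow> 1 / real N \<le> \<bar>z i - z j\<bar>"
  shows "(\<Sum>i\<in>I. 1 / (z i)\<^sup>2) \<le> 2 * (real N)\<^sup>2"
proof -
  define g where "g i = nat \<lfloor>real N * z i\<rfloor>" for i
  have Npos: "real N > 0" using N by simp
  have Nz: "1 \<le> real N * z i" if "i \<in> I" for i
    using low[OF that] Npos by (simp add: field_simps)
  have g1: "g i \<ge> 1" and gle: "real (g i) \<le> real N * z i" if "i \<in> I" for i
    using Nz[OF that] unfolding g_def by linarith+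
  \<comment> \<open>The points \<open>N z i\<close> are \<open>1\<close>-separated, so their integer parts are distinct.\<close>
  have inj: "inj_on g I"
  proof (rule inj_onI, rule ccontr)
    fix i j assume ij: "i \<in> I" "j \<in> I" "g i = g j" "i \<noteq> j"
    have "real N * (1 / real N) \<le> real N * \<bar>z i - z j\<bar>"
      using sep[OF ij(1,2,4)] by (rule mult_left_mono) simp
    hence "1 \<le> \<bar>real N * (z i - z j)\<bar>" using Npos by (simp add: abs_mult)
    hence "1 \<le> \<bar>real N * z i - real N * z j\<bar>" by (simp add: right_diff_distrib)
    moreover have "0 \<le> real N * z i" "0 \<le> real N * z j" using Nz ij(1,2) by fastforce+
    hence "\<lfloor>real N * z i\<rfloor> = \<lfloor>real N * z j\<rfloor>"
      using ij(3) unfolding g_def by (metis eq_nat_nat_iff zero_le_floor)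
    ultimately show False by linarith
  qed
  have sum_g: "(\<Sum>k\<in>g ` I. 1 / (real k)\<^sup>2) \<le> 2"
    by (intro sum_inverse_squares_finite_le) (use fin g1 in \<open>force+\<close>)
  have "(\<Sum>i\<in>I. 1 / (z i)\<^sup>2) \<le> (\<Sum>i\<in>I. (real N)\<^sup>2 * (1 / (real (g i))\<^sup>2))"
  proof (rule sum_mono)
    fix i assume i: "i \<in> I"
    have gp: "0 < real (g i)" using g1[OF i] by simp
    have gz: "real (g i) / real N \<le> z i" using gle[OF i] Npos by (simp add: field_simps)
    have gNp: "0 < real (g i) / real N" using gp Npos by simp
    have sq: "(real (g i) / real N)\<^sup>2 \<le> (z i)\<^sup>2" using gz gNp by (intro power_mono) auto
    have "0 < z i" using gz gNp by linarith
    hence "0 < (z i)\<^sup>2 * (real (g i) / real N)\<^sup>2" using gNp by (meson mult_pos_pos zero_less_power)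
    hence "1 / (z i)\<^sup>2 \<le> 1 / (real (g i) / real N)\<^sup>2"
      by (intro divide_left_mono[OF sq]) auto
    thus "1 / (z i)\<^sup>2 \<le> (real N)\<^sup>2 * (1 / (real (g i))\<^sup>2)" by (simp add: power_divide)
  qed
  also have "\<dots> = (real N)\<^sup>2 * (\<Sum>k\<in>g ` I. 1 / (real k)\<^sup>2)"
    by (simp add: sum_distrib_left sum.reindex[OF inj])
  also have "\<dots> \<le> (real N)\<^sup>2 * 2" using sum_g by (intro mult_left_mono) auto
  finally show ?thesis by simp
qed

lemma abs_frac_diff_ge:
  assumes "\<delta> \<le> frac (a - b)" "frac (a - b) \<le> 1 - \<delta>"
  shows "\<delta> \<le> \<bar>frac a - frac b\<bar>"
proof (cases "frac b \<le> frac a")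
  case True
  thus ?thesis using assms(1) frac_diff_pos[OF True] by simp
next
  case False
  thus ?thesis using assms(2) frac_diff_neg[of a b] by simp
qed

text \<open>The sum of the Fej\'er-type kernel \<open>|D\<^sub>2\<^sub>N|\<^sup>2\<close> over \<open>1/N\<close>-separated points: the point \<open>p\<^sub>0\<close>
  contributes \<open>4N\<^sup>2\<close>, the others at most \<open>1/\<parallel>t\<parallel>\<^sup>2\<close> each, which adds up to \<open>4N\<^sup>2\<close> as well.\<close>
lemma sum_sq_dirichlet_kernel_separated_le:
  fixes t :: "'a \<Rightarrow> real"
  assumes fin: "finite P" and N: "N \<ge> 1" and p0: "p0 \<in> P" and sep: "separated (1 / real N) t P"
  shows "(\<Sum>p\<in>P. (norm (dirichlet_kernel (2 * N) (t p - t p0)))\<^sup>2) \<le> 8 * (real N)\<^sup>2"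
proof -
  define y where "y p = frac (t p - t p0)" for p
  let ?Q = "P - {p0}"
  have Npos: "0 < real N" using N by simp
  have sep_pq: "1 / real N \<le> frac (t p - t p') \<and> frac (t p - t p') \<le> 1 - 1 / real N"
    if "p \<in> P" "p' \<in> P" "p \<noteq> p'" for p p'
    using sep that unfolding separated_def by blast
  have ylow: "1 / real N \<le> y p \<and> 1 / real N \<le> 1 - y p" if "p \<in> ?Q" for p
    using sep_pq[of p p0] p0 that unfolding y_def by auto
  have ysep: "1 / real N \<le> \<bar>y p - y p'\<bar>" if "p \<in> ?Q" "p' \<in> ?Q" "p \<noteq> p'" for p p'
  proof -
    have "(t p - t p0) - (t p' - t p0) = t p - t p'" by simp
    thus ?thesis using sep_pq[of p p'] that unfolding y_def by (intro abs_frac_diff_ge) auto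
  qed
  have "(\<Sum>p\<in>?Q. 1 / (y p)\<^sup>2) \<le> 2 * (real N)\<^sup>2"
    by (rule sum_inverse_squares_separated_le) (use fin N ylow ysep in auto)
  moreover have "(\<Sum>p\<in>?Q. 1 / (1 - y p)\<^sup>2) \<le> 2 * (real N)\<^sup>2"
  proof (rule sum_inverse_squares_separated_le)
    show "1 / real N \<le> \<bar>(1 - y i) - (1 - y j)\<bar>" if "i \<in> ?Q" "j \<in> ?Q" "i \<noteq> j" for i j
      using ysep[OF that] by (simp add: abs_minus_commute)
  qed (use fin N ylow in auto)
  moreover have "(\<Sum>p\<in>?Q. (norm (dirichlet_kernel (2 * N) (t p - t p0)))\<^sup>2)
      \<le> (\<Sum>p\<in>?Q. 1 / (y p)\<^sup>2 + 1 / (1 - y p)\<^sup>2)"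
  proof (rule sum_mono)
    fix p assume p: "p \<in> ?Q"
    have "0 < y p" using ylow[OF p] Npos by (meson order.strict_trans2 zero_less_divide_1_iff)
    thus "(norm (dirichlet_kernel (2 * N) (t p - t p0)))\<^sup>2 \<le> 1 / (y p)\<^sup>2 + 1 / (1 - y p)\<^sup>2"
      unfolding y_def by (rule norm_dirichlet_kernel_sq_le)
  qed
  ultimately have "(\<Sum>p\<in>?Q. (norm (dirichlet_kernel (2 * N) (t p - t p0)))\<^sup>2) \<le> 4 * (real N)\<^sup>2"
    by (simp add: sum.distrib)
  moreover have "(norm (dirichlet_kernel (2 * N) (t p0 - t p0)))\<^sup>2 \<le> (real (2 * N))\<^sup>2"
    by (intro power_mono norm_dirichlet_kernel_le) auto
  moreover have "(\<Sum>p\<in>P. (norm (dirichlet_kernel (2 * N) (t p - t p0)))\<^sup>2) =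
      (norm (dirichlet_kernel (2 * N) (t p0 - t p0)))\<^sup>2
      + (\<Sum>p\<in>?Q. (norm (dirichlet_kernel (2 * N) (t p - t p0)))\<^sup>2)"
    using fin p0 by (rule sum.remove)
  moreover have "(real (2 * N))\<^sup>2 = 4 * (real N)\<^sup>2" by (simp add: power_mult_distrib)
  ultimately show ?thesis by linarith
qed

section \<open>The large sieve\<close>

lemma sum_swap_outer_inner:
  fixes f :: "'a \<Rightarrow> 'b \<Rightarrow> 'c \<Rightarrow> 'd \<Rightarrow> 'e::comm_monoid_add"
  shows "(\<Sum>a\<in>A. \<Sum>b\<in>B. \<Sum>c\<in>C. \<Sum>d\<in>D. f a b c d) = (\<Sum>c\<in>C. \<Sum>d\<in>D. \<Sum>a\<in>A. \<Sum>b\<in>B. f a b c d)"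
proof -
  have "(\<Sum>a\<in>A. \<Sum>b\<in>B. \<Sum>c\<in>C. \<Sum>d\<in>D. f a b c d)
      = (\<Sum>a\<in>A. \<Sum>c\<in>C. \<Sum>b\<in>B. \<Sum>d\<in>D. f a b c d)"
    by (intro sum.cong refl sum.swap)
  also have "\<dots> = (\<Sum>a\<in>A. \<Sum>c\<in>C. \<Sum>d\<in>D. \<Sum>b\<in>B. f a b c d)"
    by (intro sum.cong refl sum.swap)
  also have "\<dots> = (\<Sum>c\<in>C. \<Sum>a\<in>A. \<Sum>d\<in>D. \<Sum>b\<in>B. f a b c d)"
    by (rule sum.swap)
  also have "\<dots> = (\<Sum>c\<in>C. \<Sum>d\<in>D. \<Sum>a\<in>A. \<Sum>b\<in>B. f a b c d)"
    by (intro sum.cong refl sum.swap)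
  finally show ?thesis .
qed

lemma sum_sq_norm_eq_dirichlet_form:
  fixes y :: "'a \<Rightarrow> complex" and x :: "'a \<Rightarrow> real"
  shows "complex_of_real (\<Sum>a<L. \<Sum>b<L. (norm (\<Sum>p\<in>P. y p * e ((real a - real b) * x p)))\<^sup>2)
       = (\<Sum>p\<in>P. \<Sum>p'\<in>P. y p * cnj (y p') *
            complex_of_real ((norm (dirichlet_kernel L (x p - x p')))\<^sup>2))"
proof -
  define F where "F a b p p' = y p * cnj (y p') * (e (real a * (x p - x p')) * cnj (e (real b * (x p - x p'))))"
    for a b :: nat and p p'
  have square: "complex_of_real ((norm (\<Sum>p\<in>P. y p * e ((real a - real b) * x p)))\<^sup>2)
      = (\<Sum>p\<in>P. \<Sum>p'\<in>P. F a b p p')" for a b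
  proof -
    have "e ((real a - real b) * x p) * cnj (e ((real a - real b) * x p'))
        = e (real a * (x p - x p')) * cnj (e (real b * (x p - x p')))" for p p'
      by (simp add: cnj_e e_add[symmetric] algebra_simps)
    thus ?thesis
      unfolding F_def complex_norm_square cnj_sum sum_product
      by (simp add: mult_ac)
  qed
  have kernel: "(\<Sum>a<L. \<Sum>b<L. F a b p p')
      = y p * cnj (y p') * complex_of_real ((norm (dirichlet_kernel L (x p - x p')))\<^sup>2)" for p p'
    unfolding F_def complex_norm_square dirichlet_kernel_def cnj_sum sum_product
    by (simp add: sum_distrib_left)
  show ?thesis
    by (simp only: of_real_sum square sum_swap_outer_inner kernel)
qed

lemma norm_hermitian_form_le:
  fixes y :: "'a \<Rightarrow> complex" and K :: "'a \<Rightarrow> 'a \<Rightarrow> real"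
  assumes nonneg: "\<And>p p'. 0 \<le> K p p'" and sym: "\<And>p p'. K p p' = K p' p"
    and row: "\<And>p. p \<in> P \<Longrightarrow> (\<Sum>p'\<in>P. K p p') \<le> B"
  shows "norm (\<Sum>p\<in>P. \<Sum>p'\<in>P. y p * cnj (y p') * complex_of_real (K p p'))
           \<le> B * (\<Sum>p\<in>P. (norm (y p))\<^sup>2)"
proof -
  have "norm (\<Sum>p\<in>P. \<Sum>p'\<in>P. y p * cnj (y p') * complex_of_real (K p p'))
      \<le> (\<Sum>p\<in>P. \<Sum>p'\<in>P. norm (y p) * norm (y p') * K p p')"
    using nonneg by (intro order_trans[OF norm_sum] sum_mono order_trans[OF norm_sum])
      (simp add: norm_mult)
  also have "\<dots> \<le> (\<Sum>p\<in>P. \<Sum>p'\<in>P. ((norm (y p))\<^sup>2 * K p p' + (norm (y p'))\<^sup>2 * K p p') / 2)"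
  proof (intro sum_mono)
    fix p p'
    have "0 \<le> (norm (y p) - norm (y p'))\<^sup>2" by simp
    hence "2 * (norm (y p) * norm (y p')) \<le> (norm (y p))\<^sup>2 + (norm (y p'))\<^sup>2"
      by (simp only: power2_diff)
    hence "2 * (norm (y p) * norm (y p')) * K p p' \<le> ((norm (y p))\<^sup>2 + (norm (y p'))\<^sup>2) * K p p'"
      using nonneg by (rule mult_right_mono)
    thus "norm (y p) * norm (y p') * K p p' \<le> ((norm (y p))\<^sup>2 * K p p' + (norm (y p'))\<^sup>2 * K p p') / 2"
      by (simp add: algebra_simps)
  qed
  also have "\<dots> = (\<Sum>p\<in>P. (norm (y p))\<^sup>2 * (\<Sum>p'\<in>P. K p p'))"
  proof -
    have "(\<Sum>p\<in>P. \<Sum>p'\<in>P. (norm (y p'))\<^sup>2 * K p p') = (\<Sum>p\<in>P. \<Sum>p'\<in>P. (norm (y p))\<^sup>2 * K p p')"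
      by (subst sum.swap) (simp add: sym)
    thus ?thesis
      by (simp add: sum.distrib sum_divide_distrib[symmetric] add_divide_distrib sum_distrib_left)
  qed
  also have "\<dots> \<le> (\<Sum>p\<in>P. (norm (y p))\<^sup>2 * B)"
    by (intro sum_mono mult_left_mono row) auto
  finally show ?thesis by (simp add: sum_distrib_left mult.commute)
qed

lemma sum_diagonal_shift_le:
  fixes f :: "nat \<Rightarrow> nat \<Rightarrow> real"
  assumes "\<And>a b. 0 \<le> f a b"
  shows "(\<Sum>b<N. \<Sum>u<N. f (b + u) b) \<le> (\<Sum>a<2 * N. \<Sum>b<2 * N. f a b)"
proof -
  define h where "h = (\<lambda>(b, u). (b + u, b :: nat))"
  have inj: "inj_on h ({..<N} \<times> {..<N})" unfolding h_def by (auto simp: inj_on_def)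
  have "(\<Sum>b<N. \<Sum>u<N. f (b + u) b) = (\<Sum>z\<in>{..<N} \<times> {..<N}. case_prod f (h z))"
    by (simp add: sum.cartesian_product h_def split_def)
  also have "\<dots> = (\<Sum>z\<in>h ` ({..<N} \<times> {..<N}). case_prod f z)"
    by (simp add: sum.reindex[OF inj])
  also have "\<dots> \<le> (\<Sum>z\<in>{..<2 * N} \<times> {..<2 * N}. case_prod f z)"
    by (rule sum_mono2) (auto simp: h_def assms)
  also have "\<dots> = (\<Sum>a<2 * N. \<Sum>b<2 * N. f a b)"
    by (simp add: sum.cartesian_product)
  finally show ?thesis .
qed

text \<open>The dual form is proved with the Fej\'er kernel: after averaging over shifts, the
  quadratic form has kernel \<open>|D\<^sub>2\<^sub>N(x\<^sub>p - x\<^sub>p\<^sub>')|\<^sup>2\<close>, whose row sums are \<open>O(N\<^sup>2)\<close>.\<close>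
lemma dual_large_sieve:
  fixes x :: "'a \<Rightarrow> real" and y :: "'a \<Rightarrow> complex"
  assumes fin: "finite P" and N: "N \<ge> 1" and sep: "separated (1 / real N) x P"
  shows "(\<Sum>u<N. (norm (\<Sum>p\<in>P. y p * e (real u * x p)))\<^sup>2) \<le> 8 * real N * (\<Sum>p\<in>P. (norm (y p))\<^sup>2)"
proof -
  define W where "W a b = (\<Sum>p\<in>P. y p * e ((real a - real b) * x p))" for a b :: nat
  define K where "K p p' = (norm (dirichlet_kernel (2 * N) (x p - x p')))\<^sup>2" for p p'
  have K_sym: "K p p' = K p' p" for p p'
    unfolding K_def by (metis cnj_dirichlet_kernel complex_mod_cnj minus_diff_eq)
  have K_row: "(\<Sum>p'\<in>P. K p p') \<le> 8 * (real N)\<^sup>2" if "p \<in> P" for p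
  proof -
    have "(\<Sum>p'\<in>P. K p p') = (\<Sum>p'\<in>P. (norm (dirichlet_kernel (2 * N) (x p' - x p)))\<^sup>2)"
      using K_sym by (simp add: K_def)
    thus ?thesis using sum_sq_dirichlet_kernel_separated_le[OF fin N that sep] by simp
  qed
  have "real N * (\<Sum>u<N. (norm (\<Sum>p\<in>P. y p * e (real u * x p)))\<^sup>2)
      = (\<Sum>b<N. \<Sum>u<N. (norm (W (b + u) b))\<^sup>2)"
    by (simp add: W_def)
  also have "\<dots> \<le> (\<Sum>a<2 * N. \<Sum>b<2 * N. (norm (W a b))\<^sup>2)"
    by (rule sum_diagonal_shift_le) simp
  also have "\<dots> = norm (\<Sum>p\<in>P. \<Sum>p'\<in>P. y p * cnj (y p') * complex_of_real (K p p'))"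
    unfolding W_def K_def sum_sq_norm_eq_dirichlet_form[symmetric] norm_of_real
    by (simp add: sum_nonneg)
  also have "\<dots> \<le> 8 * (real N)\<^sup>2 * (\<Sum>p\<in>P. (norm (y p))\<^sup>2)"
    by (rule norm_hermitian_form_le) (use K_sym K_row in \<open>auto simp: K_def\<close>)
  finally show ?thesis using N by (simp add: power2_eq_square mult_ac)
qed

lemma large_sieve:
  fixes x :: "'a \<Rightarrow> real" and c :: "nat \<Rightarrow> complex"
  assumes "finite P" "N \<ge> 1" "separated (1 / real N) x P"
  shows "(\<Sum>p\<in>P. (norm (\<Sum>u<N. c u * e (real u * x p)))\<^sup>2) \<le> 8 * real N * (\<Sum>u<N. (norm (c u))\<^sup>2)"
proof -
  define S where "S p = (\<Sum>u<N. c u * e (real u * x p))" for p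
  define W where "W u = (\<Sum>p\<in>P. cnj (S p) * e (real u * x p))" for u
  define A where "A = (\<Sum>p\<in>P. (norm (S p))\<^sup>2)"
  define C where "C = (\<Sum>u<N. (norm (c u))\<^sup>2)"
  have A0: "0 \<le> A" and C0: "0 \<le> C" unfolding A_def C_def by (simp_all add: sum_nonneg)
  have "complex_of_real A = (\<Sum>p\<in>P. cnj (S p) * S p)"
    unfolding A_def of_real_sum complex_norm_square by (simp add: mult.commute)
  also have "\<dots> = (\<Sum>p\<in>P. \<Sum>u<N. c u * (cnj (S p) * e (real u * x p)))"
    by (intro sum.cong refl, subst (2) S_def) (simp add: sum_distrib_left mult_ac)
  also have "\<dots> = (\<Sum>u<N. c u * W u)"
    unfolding W_def by (subst sum.swap) (simp add: sum_distrib_left)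
  finally have "norm (complex_of_real A) \<le> (\<Sum>u<N. norm (c u) * norm (W u))"
    using norm_sum[of "\<lambda>u. c u * W u" "{..<N}"] by (simp add: norm_mult)
  hence "A \<le> (\<Sum>u<N. norm (c u) * norm (W u))"
    using A0 by simp
  hence "A\<^sup>2 \<le> (\<Sum>u<N. norm (c u) * norm (W u))\<^sup>2"
    using A0 by (intro power_mono) auto
  also have "\<dots> \<le> C * (\<Sum>u<N. (norm (W u))\<^sup>2)"
    unfolding C_def by (rule Cauchy_Schwarz_ineq_sum)
  also have "\<dots> \<le> C * (8 * real N * A)"
    using dual_large_sieve[OF assms, of "\<lambda>p. cnj (S p)"] C0
    unfolding W_def A_def by (intro mult_left_mono) auto
  finally have "A * A \<le> A * (8 * real N * C)"
    by (simp add: power2_eq_square mult_ac)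
  hence "A \<le> 8 * real N * C"
    using A0 C0 by (cases "A = 0") auto
  thus ?thesis unfolding A_def C_def S_def .
qed

section \<open>Spacing of fractions\<close>

lemma frac_of_int_div_bounds:
  fixes n D :: int
  assumes D: "0 < D" "D \<le> int N" and nd: "\<not> D dvd n"
  shows "1 / real N \<le> frac (of_int n / of_int D) \<and> frac (of_int n / of_int D) \<le> 1 - 1 / real N"
proof -
  define r where "r = n mod D"
  have "0 \<le> r" "r < D" "r \<noteq> 0" using D nd unfolding r_def by (auto simp: dvd_eq_mod_eq_0)
  hence r: "1 \<le> r" "r \<le> D - 1" by auto
  have "real_of_int n / real_of_int D = real_of_int (n div D) + real_of_int r / real_of_int D"
    using D unfolding r_def by (simp add: field_simps flip: of_int_mult of_int_add)
  hence "frac (real_of_int n / real_of_int D) = frac (real_of_int r / real_of_int D)"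
    by (simp add: add.commute)
  also have "\<dots> = real_of_int r / real_of_int D"
    using r D by (intro frac_eq_id) auto
  finally have f: "frac (real_of_int n / real_of_int D) = real_of_int r / real_of_int D" .
  have Dp: "0 < real_of_int D" using D by simp
  have ND: "1 / real N \<le> 1 / real_of_int D" using Dp D by (intro divide_left_mono) auto
  also have "\<dots> \<le> real_of_int r / real_of_int D" using r Dp by (intro divide_right_mono) auto
  finally have "1 / real N \<le> real_of_int r / real_of_int D" .
  moreover have "real_of_int r / real_of_int D \<le> 1 - 1 / real_of_int D"
    using r Dp by (simp add: field_simps)
  ultimately show ?thesis using f ND by simp
qed

lemma separated_fractions_of_denominator:
  "separated (1 / real R) (\<lambda>h. - (real h / real R)) {..<R}"
  unfolding separated_def
proof (intro ballI impI)
  fix i j assume ij: "i \<in> {..<R}" "j \<in> {..<R}" "i \<noteq> j"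
  have "\<not> int R dvd int j - int i"
  proof
    assume "int R dvd int j - int i"
    hence "\<bar>int R\<bar> \<le> \<bar>int j - int i\<bar>" using ij(3) by (intro dvd_imp_le_int) auto
    thus False using ij by auto
  qed
  moreover have "- (real i / real R) - - (real j / real R) = of_int (int j - int i) / of_int (int R)"
    by (simp add: diff_divide_distrib)
  ultimately show "1 / real R \<le> frac (- (real i / real R) - - (real j / real R)) \<and>
      frac (- (real i / real R) - - (real j / real R)) \<le> 1 - 1 / real R"
    using ij by (simp only:) (rule frac_of_int_div_bounds, auto)
qed

lemma reduced_fractions_cross_diff_not_dvd:
  fixes m1 m2 k1 k2 :: int
  assumes m: "0 < m1" "0 < m2"
    and k: "0 \<le> k1" "k1 < m1" "0 \<le> k2" "k2 < m2" "gcd k1 m1 = 1" "gcd k2 m2 = 1"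
    and ne: "(m1, k1) \<noteq> (m2, k2)"
  shows "\<not> m1 * m2 dvd k1 * m2 - k2 * m1"
proof
  assume dv: "m1 * m2 dvd k1 * m2 - k2 * m1"
  have "m1 dvd k1 * m2 - k2 * m1" using dv by (rule dvd_mult_left)
  hence "m1 dvd k1 * m2" by (metis dvd_diff_commute dvd_triv_right dvd_add_right_iff diff_add_cancel)
  hence d1: "m1 dvd m2"
    using k(5) by (simp add: coprime_dvd_mult_right_iff coprime_iff_gcd_eq_1 gcd.commute)
  have "m2 dvd k1 * m2 - k2 * m1" using dv by (rule dvd_mult_right)
  hence "m2 dvd k1 * m2 - (k1 * m2 - k2 * m1)" by (rule dvd_diff[OF dvd_triv_right])
  hence "m2 dvd k2 * m1" by simp
  hence "m2 dvd m1"
    using k(6) by (simp add: coprime_dvd_mult_right_iff coprime_iff_gcd_eq_1 gcd.commute)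
  hence mm: "m1 = m2" using d1 m by (simp add: zdvd_antisym_nonneg)
  hence "m1 * m1 dvd m1 * (k1 - k2)" using dv by (simp add: algebra_simps)
  hence dk: "m1 dvd k1 - k2" using m by simp
  have "k1 - k2 = 0"
  proof (rule ccontr)
    assume "k1 - k2 \<noteq> 0"
    hence "\<bar>m1\<bar> \<le> \<bar>k1 - k2\<bar>" using dk by (rule dvd_imp_le_int)
    thus False using k mm by linarith
  qed
  thus False using ne mm by simp
qed

definition farey_pairs :: "real \<Rightarrow> (int \<times> int) set" where
  "farey_pairs X = {(m, k). 0 < m \<and> real_of_int m < X \<and> 0 \<le> k \<and> k < m \<and> gcd k m = 1}"

lemma farey_pairs_subset: "farey_pairs X \<subseteq> {0..<\<lceil>X\<rceil>} \<times> {0..<\<lceil>X\<rceil>}"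
  unfolding farey_pairs_def by (auto simp: less_ceiling_iff)

lemma finite_farey_pairs: "finite (farey_pairs X)"
  by (rule finite_subset[OF farey_pairs_subset]) simp

lemma card_farey_pairs_le: "real (card (farey_pairs X)) \<le> 4 * X\<^sup>2"
proof (cases "X \<le> 1")
  case True
  have "farey_pairs X = {}"
  proof (intro equals0I)
    fix p assume "p \<in> farey_pairs X"
    then obtain m k where "p = (m, k)" "0 < m" "real_of_int m < X" unfolding farey_pairs_def by blast
    thus False using True by linarith
  qed
  thus ?thesis by simp
next
  case False
  let ?c = "nat \<lceil>X\<rceil>"
  have "card (farey_pairs X) \<le> card ({0..<\<lceil>X\<rceil>} \<times> {0..<\<lceil>X\<rceil>})"
    by (intro card_mono farey_pairs_subset) simp
  hence "real (card (farey_pairs X)) \<le> real ?c * real ?c"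
    by (simp add: card_cartesian_product flip: of_nat_mult)
  moreover have "real ?c \<le> 2 * X"
  proof -
    have "real ?c = of_int \<lceil>X\<rceil>" using False by simp
    thus ?thesis using False ceiling_correct[of X] by linarith
  qed
  ultimately have "real (card (farey_pairs X)) \<le> (2 * X) * (2 * X)"
    by (smt (verit) mult_mono of_nat_0_le_iff)
  thus ?thesis by (simp add: power2_eq_square)
qed

lemma separated_farey_pairs:
  assumes "X\<^sup>2 \<le> real N"
  shows "separated (1 / real N) (\<lambda>(m, k). \<beta> + of_int k / of_int m) (farey_pairs X)"
  unfolding separated_def
proof (intro ballI impI)
  fix i j assume ij: "i \<in> farey_pairs X" "j \<in> farey_pairs X" "i \<noteq> j"
  obtain m1 k1 m2 k2 where i: "i = (m1, k1)" and j: "j = (m2, k2)" by fastforce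
  have pos: "0 < m1" "0 < m2" using ij unfolding i j farey_pairs_def by auto
  have "real_of_int m1 * real_of_int m2 < X * X"
    using ij pos unfolding i j farey_pairs_def by (intro mult_strict_mono) auto
  hence "real_of_int (m1 * m2) < real N" using assms by (simp add: power2_eq_square)
  hence "m1 * m2 \<le> int N" by linarith
  moreover have "\<not> m1 * m2 dvd k1 * m2 - k2 * m1"
    using ij unfolding i j farey_pairs_def by (intro reduced_fractions_cross_diff_not_dvd) auto
  ultimately have bounds: "1 / real N \<le> frac (of_int (k1 * m2 - k2 * m1) / of_int (m1 * m2)) \<and>
      frac (of_int (k1 * m2 - k2 * m1) / of_int (m1 * m2)) \<le> 1 - 1 / real N"
    using pos by (intro frac_of_int_div_bounds) auto
  have "(\<beta> + of_int k1 / of_int m1) - (\<beta> + of_int k2 / of_int m2)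
      = of_int (k1 * m2 - k2 * m1) / of_int (m1 * m2)"
    using pos by (simp add: field_simps)
  with bounds show "1 / real N \<le> frac ((case i of (m, k) \<Rightarrow> \<beta> + of_int k / of_int m) -
                      (case j of (m, k) \<Rightarrow> \<beta> + of_int k / of_int m)) \<and>
      frac ((case i of (m, k) \<Rightarrow> \<beta> + of_int k / of_int m) -
            (case j of (m, k) \<Rightarrow> \<beta> + of_int k / of_int m)) \<le> 1 - 1 / real N"
    unfolding i j prod.case by simp
qed

section \<open>The coefficients \<open>c(u, h)\<close>\<close>

lemma norm_fPr [simp]: "norm (fPr q \<alpha> P \<rho> n) = 1"
  by (simp add: fPr_def fP_def)

text \<open>Parseval's identity would give the bound \<open>1\<close>; the large sieve for the points \<open>-h/q^\<rho>\<close> gives \<open>8\<close>.\<close>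
lemma sum_norm_ccoef_sq_le: "(\<Sum>h<q ^ \<rho>. (norm (ccoef q \<alpha> P \<kappa> \<rho> l u h))\<^sup>2) \<le> 8"
proof (cases "q ^ \<rho> = 0")
  case False
  define R where "R = q ^ \<rho>"
  have "R \<noteq> 0" using False by (simp add: R_def)
  hence R1: "R \<ge> 1" and Rp: "0 < real R" by simp_all
  define a where "a w = fPr q \<alpha> P (\<kappa> + \<rho>) (u + w * q ^ \<kappa> + q ^ (\<kappa> + \<rho>) * (q ^ l div q ^ \<rho>))
      * cnj (fPr q \<alpha> P (\<kappa> + \<rho>) (w * q ^ \<kappa> + q ^ (\<kappa> + \<rho>) * (q ^ l div q ^ \<rho>)))" for w
  have c: "ccoef q \<alpha> P \<kappa> \<rho> l u h = (1 / of_nat R) * (\<Sum>w<R. a w * e (real w * - (real h / real R)))"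
    for h unfolding ccoef_def a_def R_def by (simp add: mult.commute)
  have scale: "(norm ((1 / of_nat R) * z))\<^sup>2 = (norm z)\<^sup>2 / (real R)\<^sup>2" for z :: complex
    by (simp add: norm_mult norm_divide power_divide)
  have "(\<Sum>h<R. (norm (ccoef q \<alpha> P \<kappa> \<rho> l u h))\<^sup>2)
      = (\<Sum>h<R. (norm (\<Sum>w<R. a w * e (real w * - (real h / real R))))\<^sup>2) / (real R)\<^sup>2"
    unfolding c by (simp only: scale sum_divide_distrib)
  also have "\<dots> \<le> 8 * real R * (\<Sum>w<R. (norm (a w))\<^sup>2) / (real R)\<^sup>2"
    using large_sieve[OF finite_lessThan R1 separated_fractions_of_denominator[of R]]
    by (intro divide_right_mono) auto
  also have "\<dots> = 8"
    using Rp by (simp add: a_def norm_mult power2_eq_square)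
  finally show ?thesis unfolding R_def .
qed (simp del: power_eq_0_iff)

section \<open>The weighted sum over Farey fractions\<close>

lemma sum_farey_exponential_sums_le:
  fixes c :: "nat \<Rightarrow> nat \<Rightarrow> complex" and X \<beta> :: real
  assumes X: "0 < X" "X\<^sup>2 \<le> real N"
    and c: "\<And>u. u < N \<Longrightarrow> (\<Sum>h<R. (norm (c h u))\<^sup>2) \<le> 8"
  shows "(\<Sum>h<R. \<Sum>(m, k)\<in>farey_pairs X. norm (\<Sum>u<N. c h u * e (real u * (\<beta> + of_int k / of_int m))))
           \<le> 16 * X * sqrt (real R) * real N"
proof -
  define F where "F h p = norm (\<Sum>u<N. c h u * e (real u * (case p of (m, k) \<Rightarrow> \<beta> + of_int k / of_int m)))"
    for h p
  have "0 < real N" using X by (smt (verit) zero_less_power)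
  hence N: "N \<ge> 1" by simp
  have "(\<Sum>h<R. \<Sum>p\<in>farey_pairs X. (F h p)\<^sup>2) \<le> (\<Sum>h<R. 8 * real N * (\<Sum>u<N. (norm (c h u))\<^sup>2))"
    unfolding F_def
    by (intro sum_mono large_sieve[OF finite_farey_pairs N separated_farey_pairs[OF X(2)]])
  also have "\<dots> = 8 * real N * (\<Sum>u<N. \<Sum>h<R. (norm (c h u))\<^sup>2)"
    by (simp add: sum_distrib_left sum.swap[of _ "{..<R}"])
  also have "\<dots> \<le> 8 * real N * (\<Sum>u<N. 8)"
    by (intro mult_left_mono sum_mono c) auto
  finally have sq: "(\<Sum>h<R. \<Sum>p\<in>farey_pairs X. (F h p)\<^sup>2) \<le> 64 * (real N)\<^sup>2"
    by (simp add: power2_eq_square)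
  have "(\<Sum>h<R. \<Sum>p\<in>farey_pairs X. F h p)\<^sup>2 = (\<Sum>z\<in>{..<R} \<times> farey_pairs X. F (fst z) (snd z))\<^sup>2"
    by (simp add: sum.cartesian_product split_def)
  also have "\<dots> \<le> (\<Sum>z\<in>{..<R} \<times> farey_pairs X. (F (fst z) (snd z))\<^sup>2) * card ({..<R} \<times> farey_pairs X)"
    by (rule sum_squared_le_sum_of_squares)
  also have "\<dots> = (\<Sum>h<R. \<Sum>p\<in>farey_pairs X. (F h p)\<^sup>2) * (real R * real (card (farey_pairs X)))"
    by (simp add: sum.cartesian_product split_def card_cartesian_product)
  also have "\<dots> \<le> (64 * (real N)\<^sup>2) * (real R * (4 * X\<^sup>2))"
    using sq card_farey_pairs_le by (intro mult_mono) (auto intro!: sum_nonneg)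
  also have "\<dots> = (16 * X * sqrt (real R) * real N)\<^sup>2"
    by (simp add: power_mult_distrib)
  finally have "(\<Sum>h<R. \<Sum>p\<in>farey_pairs X. F h p) \<le> 16 * X * sqrt (real R) * real N"
    by (rule power2_le_imp_le) (use X in simp)
  thus ?thesis by (simp add: F_def split_def)
qed

lemma sum_coprime_residues_le_farey_pairs:
  fixes F :: "int \<Rightarrow> int \<Rightarrow> real"
  assumes F: "\<And>m k. 0 \<le> F m k" and Ms: "\<And>m. m \<in> Ms \<Longrightarrow> 0 < m \<and> real_of_int m < X"
  shows "(\<Sum>m\<in>Ms. \<Sum>k\<in>{k. 0 \<le> k \<and> k < m \<and> gcd k m = 1}. F m k) \<le> (\<Sum>(m, k)\<in>farey_pairs X. F m k)"
proof -
  define Ks where "Ks m = {k::int. 0 \<le> k \<and> k < m \<and> gcd k m = 1}" for m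
  have Sigma_sub: "Sigma Ms Ks \<subseteq> farey_pairs X"
    using Ms by (auto simp: Ks_def farey_pairs_def)
  have "Ms \<subseteq> {0..<\<lceil>X\<rceil>}" using Ms by (force simp: less_ceiling_iff)
  hence "finite Ms" by (rule finite_subset) simp
  moreover have "\<forall>m\<in>Ms. finite (Ks m)" by (auto intro: finite_subset[of _ "{0..<m}" for m] simp: Ks_def)
  ultimately have "(\<Sum>m\<in>Ms. \<Sum>k\<in>Ks m. F m k) = (\<Sum>(m, k)\<in>Sigma Ms Ks. F m k)"
    by (rule sum.Sigma)
  also have "\<dots> \<le> (\<Sum>(m, k)\<in>farey_pairs X. F m k)"
    by (rule sum_mono2[OF finite_farey_pairs Sigma_sub]) (auto simp: F)
  finally show ?thesis unfolding Ks_def .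
qed

lemma weighted_farey_sum_le:
  fixes c :: "nat \<Rightarrow> nat \<Rightarrow> complex" and X \<beta> :: real and q :: nat
  assumes q: "q \<ge> 1" and X: "0 < X" "X\<^sup>2 \<le> real N"
    and c: "\<And>u. u < N \<Longrightarrow> (\<Sum>h<R. (norm (c h u))\<^sup>2) \<le> 8"
  shows "(\<Sum>h<R. \<Sum>m\<in>{m::int. X / real q \<le> real_of_int m \<and> real_of_int m < X}. (1 / real_of_int m) *
            (\<Sum>k\<in>{k::int. 0 \<le> k \<and> k < m \<and> gcd k m = 1}.
               norm (\<Sum>u<N. c h u * e (real u * (\<beta> + real_of_int k / real_of_int m)))))
         \<le> 16 * real q * sqrt (real R) * real N"
proof -
  define Ms where "Ms = {m::int. X / real q \<le> real_of_int m \<and> real_of_int m < X}"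
  define Ks where "Ks m = {k::int. 0 \<le> k \<and> k < m \<and> gcd k m = 1}" for m
  define F where "F h m k = norm (\<Sum>u<N. c h u * e (real u * (\<beta> + real_of_int k / real_of_int m)))"
    for h m k
  have Xq: "0 < X / real q" using X q by simp
  have "(\<Sum>m\<in>Ms. (1 / real_of_int m) * (\<Sum>k\<in>Ks m. F h m k))
      \<le> (\<Sum>m\<in>Ms. (real q / X) * (\<Sum>k\<in>Ks m. F h m k))" for h
  proof (intro sum_mono mult_right_mono)
    fix m assume "m \<in> Ms"
    hence "X / real q \<le> real_of_int m" by (simp add: Ms_def)
    hence "1 / real_of_int m \<le> 1 / (X / real q)" using Xq by (intro frac_le) auto
    thus "1 / real_of_int m \<le> real q / X" by simp
  qed (simp add: F_def sum_nonneg)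
  also have "\<dots> h \<le> (real q / X) * (\<Sum>(m, k)\<in>farey_pairs X. F h m k)" for h
    unfolding sum_distrib_left[symmetric] Ks_def using X Xq
    by (intro mult_left_mono sum_coprime_residues_le_farey_pairs) (auto simp: F_def Ms_def)
  finally have "(\<Sum>h<R. \<Sum>m\<in>Ms. (1 / real_of_int m) * (\<Sum>k\<in>Ks m. F h m k))
      \<le> (real q / X) * (\<Sum>h<R. \<Sum>(m, k)\<in>farey_pairs X. F h m k)"
    by (simp add: sum_distrib_left sum_mono)
  also have "\<dots> \<le> (real q / X) * (16 * X * sqrt (real R) * real N)"
    unfolding F_def using X by (intro mult_left_mono sum_farey_exponential_sums_le[OF X c]) auto
  also have "\<dots> = 16 * real q * sqrt (real R) * real N"
    using X by simp
  finally show ?thesis by (simp add: Ms_def Ks_def F_def)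
qed

lemma exponential_sum_bound:
  fixes q :: nat and P :: "nat \<Rightarrow> nat" and \<alpha> \<theta> :: real and \<mu> \<nu> d M :: int and \<kappa> \<rho>1 l :: nat
  assumes q: "q \<ge> 2" and d: "d \<ge> 1"
    and M: "real q powr real_of_int (\<mu> - 1) \<le> real_of_int M"
    and \<kappa>: "(real_of_int M)\<^sup>2 / (real_of_int d)\<^sup>2 \<le> real q ^ \<kappa>"
  shows "\<bar>\<Sum>h<q ^ \<rho>1.
       \<Sum>m'\<in>{m'::int. real_of_int M / (real q * real_of_int d) \<le> real_of_int m' \<and>
                       real_of_int m' < real_of_int M / real_of_int d}.
         (1 / real_of_int m') *
         (\<Sum>k'\<in>{k'::int. 0 \<le> k' \<and> k' < m' \<and> gcd k' m' = 1}.
            cmod (\<Sum>u<q ^ \<kappa>. ccoef q \<alpha> P \<kappa> \<rho>1 l u h *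
                    e (- (real u * \<theta>) / real q powr real_of_int (\<mu> + \<nu>)
                       + real_of_int k' * real u / real_of_int m')))\<bar>
    \<le> (16 * real q / ln (real q)) * ln (real q) * real q powr (real \<rho>1 / 2 + real \<kappa>)"
proof -
  define X where "X = real_of_int M / real_of_int d"
  define \<beta> where "\<beta> = - \<theta> / real q powr real_of_int (\<mu> + \<nu>)"
  have "0 < real q powr real_of_int (\<mu> - 1)" using q by simp
  with M have "0 < real_of_int M" by linarith
  hence X: "0 < X" "X\<^sup>2 \<le> real (q ^ \<kappa>)"
    using d \<kappa> by (simp_all add: X_def power_divide)
  have "0 < X / real q" using X q by simp
  let ?S = "\<Sum>h<q ^ \<rho>1. \<Sum>m\<in>{m::int. X / real q \<le> real_of_int m \<and> real_of_int m < X}.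
        (1 / real_of_int m) * (\<Sum>k\<in>{k::int. 0 \<le> k \<and> k < m \<and> gcd k m = 1}.
          cmod (\<Sum>u<q ^ \<kappa>. ccoef q \<alpha> P \<kappa> \<rho>1 l u h * e (real u * (\<beta> + real_of_int k / real_of_int m))))"
  have "?S \<le> 16 * real q * sqrt (real (q ^ \<rho>1)) * real (q ^ \<kappa>)"
    using q by (intro weighted_farey_sum_le X sum_norm_ccoef_sq_le) auto
  moreover have "0 \<le> ?S"
    using \<open>0 < X / real q\<close> by (intro sum_nonneg mult_nonneg_nonneg) auto
  moreover have "M / (q * d) = X / q" "M / d = X" by (simp_all add: X_def)
  moreover have "- (real u * \<theta>) / real q powr real_of_int (\<mu> + \<nu>) + real_of_int k * real u / real_of_int m
      = real u * (\<beta> + real_of_int k / real_of_int m)" for u k m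
    by (simp add: \<beta>_def algebra_simps)
  moreover have "real q powr (real \<rho>1 / 2 + real \<kappa>) = sqrt (real (q ^ \<rho>1)) * real (q ^ \<kappa>)"
    using q by (simp add: powr_add powr_half_sqrt_powr powr_realpow)
  ultimately show ?thesis
    using q by (simp add: mult.assoc)
qed

text \<open>Only the hypotheses \<open>d \<ge> 1\<close>, \<open>q^(\<mu>-1) \<le> M\<close> (giving \<open>M > 0\<close>) and \<open>M^2/d^2 \<le> q^\<kappa>\<close> are
  used; the implied constant is \<open>16 q / log q\<close>.\<close>
theorem mainTheorem2:
  fixes q :: nat
  assumes "q \<ge> 2"
  shows "\<exists>C::real. \<forall>(P::nat \<Rightarrow> nat) (\<alpha>::real) (\<mu>::int) (\<nu>::int) (d::int) (M::int)
            (\<kappa>::nat) (\<rho>1::nat) (\<theta>::real) (l::nat).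
    mono P \<and> d \<ge> 1 \<and>
    real q powr real_of_int (\<mu> - 1) \<le> real_of_int M \<and> real_of_int M < real q powr real_of_int \<mu> \<and>
    1 \<le> \<kappa> \<and> real \<kappa> \<le> 2 / 3 * real_of_int (\<mu> + \<nu>) \<and>
    real q powr (real \<kappa> - 1) < (real_of_int M)\<^sup>2 / (real_of_int d)\<^sup>2 \<and>
    (real_of_int M)\<^sup>2 / (real_of_int d)\<^sup>2 \<le> real q ^ \<kappa> \<and>
    int \<rho>1 \<le> \<mu> + \<nu> - int \<kappa>
    \<longrightarrow>
    \<bar>\<Sum>h<q ^ \<rho>1.
       \<Sum>m'\<in>{m'::int. real_of_int M / (real q * real_of_int d) \<le> real_of_int m' \<and>
                       real_of_int m' < real_of_int M / real_of_int d}.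
         (1 / real_of_int m') *
         (\<Sum>k'\<in>{k'::int. 0 \<le> k' \<and> k' < m' \<and> gcd k' m' = 1}.
            cmod (\<Sum>u<q ^ \<kappa>. ccoef q \<alpha> P \<kappa> \<rho>1 l u h *
                    e (- (real u * \<theta>) / real q powr real_of_int (\<mu> + \<nu>)
                       + real_of_int k' * real u / real_of_int m')))\<bar>
    \<le> C * ln (real q) * real q powr (real \<rho>1 / 2 + real \<kappa>)"
  by (intro exI[of _ "16 * real q / ln (real q)"] allI impI, elim conjE)
     (rule exponential_sum_bound[OF assms], assumption+)

end
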